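(* Let $\Omega$ be a semigroup and $(\mathcal{A},\{\eta^1,\eta^2,\dots\})$ a $Dend_\infty$-family algebra relative to $\Omega$. Then $(\mathcal{A},\{\mu^1,\mu^2,\dots\})$ is an $A_\infty$-algebra relative to $\Omega$, where $\mu^k:=\eta^{k,[1]}+\cdots+\eta^{k,[k]}$ (i.e. $\mu^k_{\alpha_1,\dots,\alpha_k}=\sum_{r=1}^k\eta^{k,[r]}_{\alpha_1,\dots,\alpha_k}$) for all $k\ge1$.
   Context: $\mathbf{k}$ is a commutative unital ring of characteristic $0$; $\Omega$ a semigroup; $\mathcal{A}=\oplus_{i\in\mathbb{Z}}\mathcal{A}^i$ a graded $\mathbf{k}$-module. $C_k=\{[1],\dots,[k]\}$ formal symbols. For $m,n\ge1$, $1\le i\le m$, $1\le r\le m+n-1$: $R_0[r]$ is $[r]$ if $r\le i-1$, $[i]$ if $i\le r\le i+n-1$, $[r-n+1]$ if $r\ge i+n$; $R_i[r]$ is $[r-i+1]$ if $i\le r\le i+n-1$ and the formal sum $[1]+\cdots+[n]$ otherwise; $\eta^{n,[1]+\cdots+[n]}:=\sum_{s}\eta^{n,[s]}$. Sign $\pm:=(-1)^{i(n+1)+n(|a_1|+\cdots+|a_{i-1}|)}$. A $Dend_\infty$-family algebra: for each $k\ge1$, a $k$-tuple $\eta^k=(\eta^{k,[1]},\dots,\eta^{k,[k]})$, each $\eta^{k,[r]}=\{\eta^{k,[r]}_{\alpha_1,\dots,\alpha_k}:\mathcal{A}^{\otimes k}\to\mathcal{A}\}_{\alpha_j\in\Omega}$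 multilinear of degree $k-2$, with $\eta^{k,[r]}_{\alpha_1,\dots,\alpha_k}$ independent of $\alpha_r$, satisfying for all $N\ge1$, $[r]\in C_N$: $\sum_{m+n=N+1}\sum_{i=1}^m\pm\,\eta^{m,R_0[r]}_{\alpha_1,\dots,\alpha_i\cdots\alpha_{i+n-1},\dots,\alpha_N}\big(a_1,\dots,a_{i-1},\eta^{n,R_i[r]}_{\alpha_i,\dots,\alpha_{i+n-1}}(a_i,\dots,a_{i+n-1}),a_{i+n},\dots,a_N\big)=0$. An $A_\infty$-algebra relative to $\Omega$: collections $\mu^k=\{\mu^k_{\alpha_1,\dots,\alpha_k}:\mathcal{A}^{\otimes k}\to\mathcal{A}\}_{\alpha_j\in\Omega}$ of multilinear maps of degree $k-2$, $k\ge1$, with $\sum_{m+n=N+1}\sum_{i=1}^m\pm\,\mu^m_{\alpha_1,\dots,\alpha_i\cdots\alpha_{i+n-1},\dots,\alpha_N}\big(a_1,\dots,a_{i-1},\mu^n_{\alpha_i,\dots,\alpha_{i+n-1}}(a_i,\dots,a_{i+n-1}),a_{i+n},\dots,a_N\big)=0$ for all $N\ge1$, homogeneous $a_j$ and $\alpha_j\in\Omega$ (in the outer label the block $\alpha_i,\dots,\alpha_{i+n-1}$ is replaced by its product). *)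

theory Defs
  imports Complex_Main
begin

text \<open>Graded k-module A = (+)_i A^i: 'a is a k-module via scale, G i is the
  homogeneous component A^i, and every element is uniquely a finite sum of
  homogeneous components.\<close>
definition graded_module :: "('k::comm_ring_1 \<Rightarrow> 'a::ab_group_add \<Rightarrow> 'a) \<Rightarrow> (int \<Rightarrow> 'a set) \<Rightarrow> bool" where
  "graded_module scale G \<longleftrightarrow> module scale \<and> (\<forall>i. module.subspace scale (G i)) \<and>
     (\<forall>x. \<exists>!f. finite {i. f i \<noteq> 0} \<and> (\<forall>i. f i \<in> G i) \<and> x = sum f {i. f i \<noteq> 0})"

fun sprod :: "'o::semigroup_mult list \<Rightarrow> 'o" where
  "sprod [x] = x"
| "sprod (x # y # ys) = x * sprod (y # ys)"
| "sprod [] = undefined"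

definition multilinear_deg ::
  "('k::comm_ring_1 \<Rightarrow> 'a::ab_group_add \<Rightarrow> 'a) \<Rightarrow> (int \<Rightarrow> 'a set) \<Rightarrow> nat \<Rightarrow> ('a list \<Rightarrow> 'a) \<Rightarrow> bool" where
  "multilinear_deg scale G k f \<longleftrightarrow>
     (\<forall>as j x y. length as = k \<and> j < k \<longrightarrow> f (as[j := x + y]) = f (as[j := x]) + f (as[j := y])) \<and>
     (\<forall>as j c x. length as = k \<and> j < k \<longrightarrow> f (as[j := scale c x]) = scale c (f (as[j := x]))) \<and>
     (\<forall>as ds. length as = k \<and> length ds = k \<and> (\<forall>j<k. as ! j \<in> G (ds ! j)) \<longrightarrow>
        f as \<in> G (sum_list ds + int k - 2))"

definition stasheff_sign :: "nat \<Rightarrow> nat \<Rightarrow> int list \<Rightarrow> 'k::comm_ring_1" where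
  "stasheff_sign i n ds =
     (if even (int (i * (n + 1)) + int n * sum_list (take (i - 1) ds)) then 1 else -1)"

text \<open>Outer labels: block alpha_i..alpha_{i+n-1} replaced by its product (i 1-based).\<close>
definition lab_comp :: "nat \<Rightarrow> nat \<Rightarrow> 'o::semigroup_mult list \<Rightarrow> 'o list" where
  "lab_comp i n al = take (i - 1) al @ [sprod (take n (drop (i - 1) al))] @ drop (i - 1 + n) al"

definition arg_comp :: "nat \<Rightarrow> nat \<Rightarrow> 'a \<Rightarrow> 'a list \<Rightarrow> 'a list" where
  "arg_comp i n b as = take (i - 1) as @ [b] @ drop (i - 1 + n) as"

definition blk :: "nat \<Rightarrow> nat \<Rightarrow> 'x list \<Rightarrow> 'x list" where
  "blk i n xs = take n (drop (i - 1) xs)"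

definition R0 :: "nat \<Rightarrow> nat \<Rightarrow> nat \<Rightarrow> nat" where
  "R0 i n r = (if r \<le> i - 1 then r else if r \<le> i + n - 1 then i else r - n + 1)"

definition eta_Ri ::
  "(nat \<Rightarrow> nat \<Rightarrow> 'o list \<Rightarrow> 'a list \<Rightarrow> 'a::ab_group_add) \<Rightarrow> nat \<Rightarrow> nat \<Rightarrow> nat \<Rightarrow> 'o list \<Rightarrow> 'a list \<Rightarrow> 'a" where
  "eta_Ri \<eta> i n r al as =
     (if i \<le> r \<and> r \<le> i + n - 1 then \<eta> n (r - i + 1) al as else (\<Sum>s = 1..n. \<eta> n s al as))"

text \<open>Dend_infinity-family algebra relative to Omega: eta k r al as = eta^{k,[r]}_{al}(as).\<close>
definition dend_inf_family ::
  "('k::comm_ring_1 \<Rightarrow> 'a::ab_group_add \<Rightarrow> 'a) \<Rightarrow> (int \<Rightarrow> 'a set) \<Rightarrow>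
   (nat \<Rightarrow> nat \<Rightarrow> 'o::semigroup_mult list \<Rightarrow> 'a list \<Rightarrow> 'a) \<Rightarrow> bool" where
  "dend_inf_family scale G \<eta> \<longleftrightarrow>
     (\<forall>k\<ge>1. \<forall>r\<in>{1..k}. \<forall>al. length al = k \<longrightarrow> multilinear_deg scale G k (\<eta> k r al)) \<and>
     (\<forall>k\<ge>1. \<forall>r\<in>{1..k}. \<forall>al x as. length al = k \<longrightarrow> \<eta> k r (al[r - 1 := x]) as = \<eta> k r al as) \<and>
     (\<forall>N\<ge>1. \<forall>r\<in>{1..N}. \<forall>al as ds. length al = N \<and> length as = N \<and> length ds = N \<and>
        (\<forall>j<N. as ! j \<in> G (ds ! j)) \<longrightarrow>
        (\<Sum>m = 1..N. \<Sum>i = 1..m.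
           scale (stasheff_sign i (N + 1 - m) ds)
             (\<eta> m (R0 i (N + 1 - m) r) (lab_comp i (N + 1 - m) al)
               (arg_comp i (N + 1 - m)
                  (eta_Ri \<eta> i (N + 1 - m) r (blk i (N + 1 - m) al) (blk i (N + 1 - m) as)) as))) = 0)"

text \<open>A_infinity-algebra relative to Omega: mu k al as = mu^k_{al}(as).\<close>
definition A_inf_algebra ::
  "('k::comm_ring_1 \<Rightarrow> 'a::ab_group_add \<Rightarrow> 'a) \<Rightarrow> (int \<Rightarrow> 'a set) \<Rightarrow>
   (nat \<Rightarrow> 'o::semigroup_mult list \<Rightarrow> 'a list \<Rightarrow> 'a) \<Rightarrow> bool" where
  "A_inf_algebra scale G \<mu> \<longleftrightarrow>
     (\<forall>k\<ge>1. \<forall>al. length al = k \<longrightarrow> multilinear_deg scale G k (\<mu> k al)) \<and>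
     (\<forall>N\<ge>1. \<forall>al as ds. length al = N \<and> length as = N \<and> length ds = N \<and>
        (\<forall>j<N. as ! j \<in> G (ds ! j)) \<longrightarrow>
        (\<Sum>m = 1..N. \<Sum>i = 1..m.
           scale (stasheff_sign i (N + 1 - m) ds)
             (\<mu> m (lab_comp i (N + 1 - m) al)
               (arg_comp i (N + 1 - m)
                  (\<mu> (N + 1 - m) (blk i (N + 1 - m) al) (blk i (N + 1 - m) as)) as))) = 0)"

end

theory Submission
  imports Defs
begin

text \<open>Fix the outer arity m and the insertion position i, and sum the terms of the
  Dend relation with output [r] over all r. For r < i the outer component is [r] and the
  inner map is the full sum \<mu>^n; for r \<ge> i + n the outer component is [r - n + 1], again
  with inner map \<mu>^n; for i \<le> r < i + n the outer component is always [i] and the inner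
  components [1], ..., [n] occur once each, which by multilinearity of \<eta>^{m,[i]} in its
  i-th argument add up to \<mu>^n. Hence the r-sum is \<mu>^m \<circ>_i \<mu>^n, and since the sign does
  not depend on r, summing the Dend relations over r gives the A-infinity relation.\<close>

lemma multilinear_deg_update_zero:
  assumes "multilinear_deg scale G k f" "length as = k" "j < k"
  shows "f (as[j := 0]) = 0"
proof -
  have "f (as[j := 0 + 0]) = f (as[j := 0]) + f (as[j := 0])"
    using assms unfolding multilinear_deg_def by blast
  then show ?thesis by simp
qed

lemma multilinear_deg_update_sum:
  assumes "multilinear_deg scale G k f" "length as = k" "j < k" "finite S"
  shows "f (as[j := (\<Sum>t\<in>S. g t)]) = (\<Sum>t\<in>S. f (as[j := g t]))"
  using assms(4)
proof (induction S rule: finite_induct)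
  case empty
  then show ?case using multilinear_deg_update_zero[OF assms(1-3)] by simp
next
  case (insert x S)
  have "f (as[j := g x + sum g S]) = f (as[j := g x]) + f (as[j := sum g S])"
    using assms unfolding multilinear_deg_def by blast
  then show ?case using insert by simp
qed

lemma multilinear_deg_sum:
  fixes f :: "'s \<Rightarrow> 'a::ab_group_add list \<Rightarrow> 'a"
  assumes "module scale" "\<And>d. module.subspace scale (G d)"
    and "\<And>s. s \<in> S \<Longrightarrow> multilinear_deg scale G k (f s)"
  shows "multilinear_deg scale G k (\<lambda>as. \<Sum>s\<in>S. f s as)"
  unfolding multilinear_deg_def
proof (intro conjI allI impI)
  fix as :: "'a list" and j x y
  assume "length as = k \<and> j < k"
  then show "(\<Sum>s\<in>S. f s (as[j := x + y])) = (\<Sum>s\<in>S. f s (as[j := x])) + (\<Sum>s\<in>S. f s (as[j := y]))"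
    using assms(3) by (simp add: multilinear_deg_def flip: sum.distrib)
next
  fix as :: "'a list" and j c x
  assume "length as = k \<and> j < k"
  then show "(\<Sum>s\<in>S. f s (as[j := scale c x])) = scale c (\<Sum>s\<in>S. f s (as[j := x]))"
    using assms(3) by (simp add: multilinear_deg_def module.scale_sum_right[OF assms(1)])
next
  fix as :: "'a list" and ds
  assume "length as = k \<and> length ds = k \<and> (\<forall>j<k. as ! j \<in> G (ds ! j))"
  then show "(\<Sum>s\<in>S. f s as) \<in> G (sum_list ds + int k - 2)"
    using assms(3) by (intro module.subspace_sum[OF assms(1,2)]) (auto simp: multilinear_deg_def)
qed

lemma sum_nat_ivl_split:
  fixes f :: "nat \<Rightarrow> 'a::comm_monoid_add"
  assumes "l \<le> k + 1" "k \<le> u"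
  shows "sum f {l..u} = sum f {l..k} + sum f {k + 1..u}"
  using sum.ub_add_nat[OF assms(1), of f "u - k"] assms(2) by simp

lemma length_lab_comp:
  "1 \<le> i \<Longrightarrow> i \<le> m \<Longrightarrow> 1 \<le> n \<Longrightarrow> length al = m + n - 1 \<Longrightarrow> length (lab_comp i n al) = m"
  unfolding lab_comp_def by auto

lemma length_arg_comp:
  "1 \<le> i \<Longrightarrow> i \<le> m \<Longrightarrow> 1 \<le> n \<Longrightarrow> length as = m + n - 1 \<Longrightarrow> length (arg_comp i n b as) = m"
  unfolding arg_comp_def by auto

lemma arg_comp_eq_update:
  "i - 1 < length as \<Longrightarrow> arg_comp i n b as = (arg_comp i n 0 as)[i - 1 := b]"
  unfolding arg_comp_def by (simp add: list_update_append)

lemma sum_R0_eta_Ri: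
  assumes f_i: "multilinear_deg scale G m (f i)"
    and i: "1 \<le> i" "i \<le> m" and n: "1 \<le> n" and as: "length as = m + n - 1"
  shows "(\<Sum>r = 1..m + n - 1. f (R0 i n r) (arg_comp i n (eta_Ri \<eta> i n r bl bs) as))
       = (\<Sum>s = 1..m. f s (arg_comp i n (\<Sum>t = 1..n. \<eta> n t bl bs) as))"
proof -
  define A where "A b = arg_comp i n b as" for b
  define P where "P r = f (R0 i n r) (A (eta_Ri \<eta> i n r bl bs))" for r
  define F where "F s = f s (A (\<Sum>t = 1..n. \<eta> n t bl bs))" for s
  have A_update: "A b = (arg_comp i n 0 as)[i - 1 := b]" for b
    unfolding A_def using i n as by (intro arg_comp_eq_update) simp
  have len_A: "length (arg_comp i n 0 as) = m"
    using length_arg_comp[OF i n as] .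
  have before: "(\<Sum>r = 1..i - 1. P r) = (\<Sum>s = 1..i - 1. F s)"
    by (rule sum.cong) (use i n in \<open>auto simp: P_def F_def R0_def eta_Ri_def\<close>)
  have "(\<Sum>r = i..i + n - 1. P r) = (\<Sum>t = 1..n. P (t + (i - 1)))"
    using i n sum.shift_bounds_cl_nat_ivl[of P 1 "i - 1" n] by (simp add: add.commute)
  also have "\<dots> = (\<Sum>t = 1..n. f i ((arg_comp i n 0 as)[i - 1 := \<eta> n t bl bs]))"
    by (rule sum.cong) (use i n in \<open>auto simp: P_def R0_def eta_Ri_def A_update\<close>)
  also have "\<dots> = F i"
    unfolding F_def A_update
    using multilinear_deg_update_sum[OF f_i len_A, of "i - 1" "{1..n}"] i by simp
  finally have block: "(\<Sum>r = i..i + n - 1. P r) = F i" .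
  have "(\<Sum>r = i + n..m + n - 1. P r) = (\<Sum>s = i + 1..m. P (s + (n - 1)))"
    using i n sum.shift_bounds_cl_nat_ivl[of P "i + 1" "n - 1" m] by simp
  also have "\<dots> = (\<Sum>s = i + 1..m. F s)"
    by (rule sum.cong) (use i n in \<open>auto simp: P_def F_def R0_def eta_Ri_def\<close>)
  finally have after: "(\<Sum>r = i + n..m + n - 1. P r) = (\<Sum>s = i + 1..m. F s)" .
  have "(\<Sum>r = 1..m + n - 1. P r)
      = (\<Sum>r = 1..i - 1. P r) + (\<Sum>r = i..i + n - 1. P r) + (\<Sum>r = i + n..m + n - 1. P r)"
    using i n sum_nat_ivl_split[of 1 "i - 1" "m + n - 1" P] sum_nat_ivl_split[of i "i + n - 1" "m + n - 1" P]
    by (simp add: add.assoc)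
  also have "\<dots> = (\<Sum>s = 1..i - 1. F s) + F i + (\<Sum>s = i + 1..m. F s)"
    using before block after by simp
  also have "\<dots> = (\<Sum>s = 1..m. F s)"
    using i sum_nat_ivl_split[of 1 "i - 1" m F] sum_nat_ivl_split[of i i m F] by (simp add: add.assoc)
  finally show ?thesis unfolding P_def F_def A_def .
qed

lemma dend_inf_family_stasheff_relation:
  assumes M: "module scale" and dend: "dend_inf_family scale G \<eta>"
    and N: "1 \<le> N" and lengths: "length al = N" "length as = N" "length ds = N"
    and homogeneous: "\<forall>j<N. as ! j \<in> G (ds ! j)"
  shows "(\<Sum>m = 1..N. \<Sum>i = 1..m.
           scale (stasheff_sign i (N + 1 - m) ds)
             (\<Sum>s = 1..m. \<eta> m s (lab_comp i (N + 1 - m) al)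
               (arg_comp i (N + 1 - m)
                 (\<Sum>t = 1..N + 1 - m. \<eta> (N + 1 - m) t (blk i (N + 1 - m) al) (blk i (N + 1 - m) as))
                 as))) = 0" (is "?lhs = 0")
proof -
  define T where "T m i r =
    scale (stasheff_sign i (N + 1 - m) ds)
      (\<eta> m (R0 i (N + 1 - m) r) (lab_comp i (N + 1 - m) al)
        (arg_comp i (N + 1 - m)
          (eta_Ri \<eta> i (N + 1 - m) r (blk i (N + 1 - m) al) (blk i (N + 1 - m) as)) as))" for m i r
  have ml: "multilinear_deg scale G k (\<eta> k r al')"
    if "1 \<le> r" "r \<le> k" "length al' = k" for k r al'
    using dend that unfolding dend_inf_family_def by auto
  have "(\<Sum>m = 1..N. \<Sum>i = 1..m. T m i r) = 0" if "r \<in> {1..N}" for r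
    using dend N lengths homogeneous that unfolding dend_inf_family_def T_def by blast
  then have "0 = (\<Sum>r = 1..N. \<Sum>m = 1..N. \<Sum>i = 1..m. T m i r)"
    by simp
  also have "\<dots> = (\<Sum>m = 1..N. \<Sum>i = 1..m. \<Sum>r = 1..N. T m i r)"
    by (subst sum.swap) (intro sum.cong refl sum.swap)
  also have "\<dots> = ?lhs"
  proof (intro sum.cong refl)
    fix m i
    assume m: "m \<in> {1..N}" and i: "i \<in> {1..m}"
    then have N_eq: "N = m + (N + 1 - m) - 1"
      by auto
    have "(\<Sum>r = 1..N. T m i r) = scale (stasheff_sign i (N + 1 - m) ds)
        (\<Sum>r = 1..m + (N + 1 - m) - 1. \<eta> m (R0 i (N + 1 - m) r) (lab_comp i (N + 1 - m) al)
          (arg_comp i (N + 1 - m)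
            (eta_Ri \<eta> i (N + 1 - m) r (blk i (N + 1 - m) al) (blk i (N + 1 - m) as)) as))"
      unfolding T_def module.scale_sum_right[OF M] using N_eq by simp
    also have "\<dots> = scale (stasheff_sign i (N + 1 - m) ds)
        (\<Sum>s = 1..m. \<eta> m s (lab_comp i (N + 1 - m) al)
          (arg_comp i (N + 1 - m)
            (\<Sum>t = 1..N + 1 - m. \<eta> (N + 1 - m) t (blk i (N + 1 - m) al) (blk i (N + 1 - m) as)) as))"
      using m i lengths N_eq
      by (subst sum_R0_eta_Ri[where scale = scale and G = G]) (auto intro!: ml length_lab_comp)
    finally show "(\<Sum>r = 1..N. T m i r) = \<dots>" .
  qed
  finally show ?thesis by simp
qed

theorem proposition5p10:
  fixes scale :: "'k::comm_ring_1 \<Rightarrow> 'a::ab_group_add \<Rightarrow> 'a"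
    and G :: "int \<Rightarrow> 'a set"
    and \<eta> :: "nat \<Rightarrow> nat \<Rightarrow> 'o::semigroup_mult list \<Rightarrow> 'a list \<Rightarrow> 'a"
  assumes "CHAR('k) = 0"
    and "graded_module scale G"
    and "dend_inf_family scale G \<eta>"
  shows "A_inf_algebra scale G (\<lambda>k al as. \<Sum>r = 1..k. \<eta> k r al as)"
proof -
  have M: "module scale" and subspaces: "\<And>d. module.subspace scale (G d)"
    using assms(2) unfolding graded_module_def by auto
  have "multilinear_deg scale G k (\<lambda>as. \<Sum>r = 1..k. \<eta> k r al as)" if "length al = k" for k al
    using assms(3) that
    by (intro multilinear_deg_sum[OF M subspaces]) (auto simp: dend_inf_family_def)
  then show ?thesis
    using dend_inf_family_stasheff_relation[OF M assms(3)] unfolding A_inf_algebra_def by auto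
qed

end
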